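(* Let $n\geq 2$ and fix $I\sqcup J=[2,n]$. There is at most one $\sigma\in S_n$ such that $A^\sigma_{[2,n],\emptyset}=A^{\mathrm{id}}_{I,J}$.
   Context: Let $w_{ij}$, $1\leq i,j\leq n$, be formal variables subject only to $w_{ij}+w_{ji}=0$. Let $[2,n]=\{2,\dots,n\}$. For $\sigma\in S_n$ and a disjoint decomposition $I\sqcup J=[2,n]$, set $$A^\sigma_{I,J}:=\sum_{i\in I}\sum_{\ell=1}^{i-1}w_{\sigma(\ell)\sigma(i)}-\sum_{j\in J}\sum_{\ell=1}^{j-1}w_{\sigma(\ell)\sigma(j)}.$$ *)

theory Defs
  imports "HOL-Combinatorics.Permutations" "HOL-Library.Function_Algebras"
begin

text \<open>The formal variables w_ij with the sole relation w_ij + w_ji = 0 generate the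
free abelian group with basis the w_ab for a < b.  We represent an element of it by its
coefficient function on pairs (a,b) (only pairs with a < b carry nonzero coefficients).
The diagonal variables w_aa never occur in the expressions below.\<close>

definition wvar :: "nat \<Rightarrow> nat \<Rightarrow> (nat \<times> nat \<Rightarrow> int)" where
  "wvar a b = (\<lambda>p. if a < b \<and> p = (a, b) then 1
                   else if b < a \<and> p = (b, a) then -1 else 0)"

definition Aexpr :: "(nat \<Rightarrow> nat) \<Rightarrow> nat set \<Rightarrow> nat set \<Rightarrow> (nat \<times> nat \<Rightarrow> int)" where
  "Aexpr \<sigma> I J =
     (\<Sum>i\<in>I. \<Sum>l\<in>{1..<i}. wvar (\<sigma> l) (\<sigma> i))
   - (\<Sum>j\<in>J. \<Sum>l\<in>{1..<j}. wvar (\<sigma> l) (\<sigma> j))"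

end

theory Submission
  imports Defs
begin

text \<open>For a < b the coefficient of w_ab in A^\<sigma>_{[2,n],\<emptyset>} is +1 if a precedes b in the
word \<sigma>(1) ... \<sigma>(n), i.e. if \<sigma>\<inverse>(a) < \<sigma>\<inverse>(b), and -1 otherwise.  So this expression
records the relative order of all values of \<sigma>\<inverse>, which determines \<sigma>\<inverse> and hence \<sigma>.\<close>

lemma sum_fun_apply: "(sum f A) x = (\<Sum>i\<in>A. f i x)"
  by (induction A rule: infinite_finite_induct) auto

lemma wvar_apply:
  assumes "a < b"
  shows "wvar x y (a, b) = (if x = a \<and> y = b then 1 else 0) - (if x = b \<and> y = a then 1 else 0)"
  using assms by (auto simp: wvar_def)

lemma sum_ordered_pairs_indicator:
  fixes n p q :: nat
  shows "(\<Sum>i\<in>{2..n}. \<Sum>l\<in>{1..<i}. if l = p \<and> i = q then 1 else 0)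
     = (if 1 \<le> p \<and> p < q \<and> q \<le> n then (1::int) else 0)"
proof -
  have "(\<Sum>l\<in>{1..<i}. if l = p \<and> i = q then 1 else 0)
          = (if i = q then (if 1 \<le> p \<and> p < i then 1 else 0) else (0::int))" for i :: nat
    by (cases "i = q") (simp_all add: sum.delta)
  then show ?thesis
    by (simp add: sum.delta)
qed

lemma Aexpr_full_coeff:
  assumes \<sigma>: "\<sigma> permutes {1..n}" and "a < b" and "a \<in> {1..n}" and "b \<in> {1..n}"
  shows "Aexpr \<sigma> {2..n} {} (a, b) = (if inv \<sigma> a < inv \<sigma> b then 1 else -1)"
proof -
  define p q where "p = inv \<sigma> a" and "q = inv \<sigma> b"
  have \<sigma>_eq_a: "\<sigma> l = a \<longleftrightarrow> l = p" and \<sigma>_eq_b: "\<sigma> l = b \<longleftrightarrow> l = q" for l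
    using permutes_inverses[OF \<sigma>] unfolding p_def q_def by metis+
  have "Aexpr \<sigma> {2..n} {} (a, b)
      = (\<Sum>i\<in>{2..n}. \<Sum>l\<in>{1..<i}. wvar (\<sigma> l) (\<sigma> i) (a, b))"
    by (simp add: Aexpr_def sum_fun_apply)
  also have "\<dots> = (\<Sum>i\<in>{2..n}. \<Sum>l\<in>{1..<i}.
      (if l = p \<and> i = q then 1 else 0) - (if l = q \<and> i = p then 1 else 0))"
    unfolding wvar_apply[OF \<open>a < b\<close>] \<sigma>_eq_a \<sigma>_eq_b ..
  also have "\<dots> = (if 1 \<le> p \<and> p < q \<and> q \<le> n then 1 else 0)
      - (if 1 \<le> q \<and> q < p \<and> p \<le> n then 1 else 0)"
    by (simp only: sum_subtractf sum_ordered_pairs_indicator)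
  finally have coeff: "Aexpr \<sigma> {2..n} {} (a, b) = \<dots>" .
  have "p \<in> {1..n}" "q \<in> {1..n}"
    using assms permutes_in_image[OF permutes_inv[OF \<sigma>]] unfolding p_def q_def by blast+
  moreover have "p \<noteq> q"
    using \<sigma>_eq_a[of p] \<sigma>_eq_b[of p] \<open>a < b\<close> by auto
  ultimately show ?thesis
    unfolding coeff p_def[symmetric] q_def[symmetric] by auto
qed

lemma permutes_rank:
  fixes f :: "nat \<Rightarrow> nat"
  assumes f: "f permutes {1..n}" and "x \<in> {1..n}"
  shows "f x = Suc (card {y\<in>{1..n}. f y < f x})"
proof -
  have "f x \<in> {1..n}"
    using permutes_in_image[OF f] \<open>x \<in> {1..n}\<close> by blast
  then have "y \<in> {1..n} \<and> f y < f x \<longleftrightarrow> f y \<in> {1..<f x}" for y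
    using permutes_in_image[OF f, of y] by auto
  then have "{y\<in>{1..n}. f y < f x} = f -` {1..<f x}"
    by blast
  then have "card {y\<in>{1..n}. f y < f x} = card {1..<f x}"
    using card_vimage_inj[OF permutes_inj[OF f]] permutes_surj[OF f] by simp
  then show ?thesis
    using \<open>f x \<in> {1..n}\<close> by simp
qed

lemma permutes_eq_if_same_order:
  fixes f g :: "nat \<Rightarrow> nat"
  assumes f: "f permutes {1..n}" and g: "g permutes {1..n}"
    and same_order: "\<And>x y. x \<in> {1..n} \<Longrightarrow> y \<in> {1..n} \<Longrightarrow> f y < f x \<longleftrightarrow> g y < g x"
  shows "f = g"
proof
  fix x
  show "f x = g x"
  proof (cases "x \<in> {1..n}")
    case True
    then have "{y\<in>{1..n}. f y < f x} = {y\<in>{1..n}. g y < g x}"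
      using same_order by blast
    then show ?thesis
      using permutes_rank[OF f True] permutes_rank[OF g True] by simp
  next
    case False
    then show ?thesis
      using f g by (simp add: permutes_not_in)
  qed
qed

lemma Aexpr_full_inj:
  assumes \<sigma>: "\<sigma> permutes {1..n}" and \<tau>: "\<tau> permutes {1..n}"
    and eq: "Aexpr \<sigma> {2..n} {} = Aexpr \<tau> {2..n} {}"
  shows "\<sigma> = \<tau>"
proof -
  have same_order: "inv \<sigma> a < inv \<sigma> b \<longleftrightarrow> inv \<tau> a < inv \<tau> b"
    if "a < b" "a \<in> {1..n}" "b \<in> {1..n}" for a b
    using eq Aexpr_full_coeff[OF \<sigma> that] Aexpr_full_coeff[OF \<tau> that]
    by (auto split: if_splits)
  have "inv \<sigma> a < inv \<sigma> b \<longleftrightarrow> inv \<tau> a < inv \<tau> b" if "a \<in> {1..n}" "b \<in> {1..n}" for a b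
  proof -
    have "inv \<sigma> a = inv \<sigma> b \<longleftrightarrow> a = b" "inv \<tau> a = inv \<tau> b \<longleftrightarrow> a = b"
      using permutes_inj[OF permutes_inv[OF \<sigma>]] permutes_inj[OF permutes_inv[OF \<tau>]]
      by (auto dest: injD)
    then show ?thesis
      using same_order[of a b] same_order[of b a] that by (cases a b rule: linorder_cases) auto
  qed
  then have "inv \<sigma> = inv \<tau>"
    using permutes_eq_if_same_order[OF permutes_inv[OF \<sigma>] permutes_inv[OF \<tau>]] by blast
  then show ?thesis
    by (metis permutes_inv_inv \<sigma> \<tau>)
qed

theorem lemma3p7:
  fixes n :: nat and I J :: "nat set"
  assumes "2 \<le> n" and "I \<inter> J = {}" and "I \<union> J = {2..n}"
  shows "\<forall>\<sigma> \<tau>. \<sigma> permutes {1..n} \<and> Aexpr \<sigma> {2..n} {} = Aexpr id I J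
              \<and> \<tau> permutes {1..n} \<and> Aexpr \<tau> {2..n} {} = Aexpr id I J
              \<longrightarrow> \<sigma> = \<tau>"
  using Aexpr_full_inj by metis

end
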